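(* Let $\alpha$ be a graph function on a strongly connected digraph $G$. Applying a lowering operation (at any vertex) to $\alpha$ cannot increase the raising imbalance $\rho^R_v$ at any vertex $v$. Symmetrically, applying a raising operation cannot increase the lowering imbalance $\rho^L_v$ at any vertex $v$.
   Context: $G$ is a strongly connected directed graph (self-loops allowed). A graph function assigns a real weight $\alpha_{uv}$ to each edge $(u,v)$. Let $\alpha_v^{\text{in}}=\max_{u:(u,v)\in G}\alpha_{uv}$, $\alpha_v^{\text{out}}=\max_{w:(v,w)\in G}\alpha_{vw}$. A balancing operation at $v$ adds $(\alpha_v^{\text{out}}-\alpha_v^{\text{in}})/2$ to every edge weight $\alpha_{uv}$ with $u\neq v$, subtracts it from every $\alpha_{vw}$ with $w\ne v$, and leaves a self-loop at $v$ unchanged. $\rho_v^R=\max\{0,\alpha_v^{\text{out}}-\alpha_v^{\text{in}}\}$, $\rho_v^L=\max\{0,\alpha_v^{\text{in}}-\alpha_v^{\text{out}}\}$. A raising operation at $v$ performs the balancing operation at $v$ if $\rho^R_v>0$ and nothing otherwise; a lowering operation at $v$ performs it if $\rho^L_v>0$ and nothing otherwise. *)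

theory Defs
  imports Complex_Main
begin

definition strongly_connected_digraph :: "'a set \<Rightarrow> ('a \<times> 'a) set \<Rightarrow> bool" where
  "strongly_connected_digraph V E \<longleftrightarrow>
     finite V \<and> V \<noteq> {} \<and> E \<subseteq> V \<times> V \<and> (\<forall>u\<in>V. \<forall>v\<in>V. (u, v) \<in> E\<^sup>+)"

text \<open>A graph function assigns a real weight alpha u v to each edge (u,v);
values off the edge set are irrelevant.\<close>
type_synonym 'a graph_fun = "'a \<Rightarrow> 'a \<Rightarrow> real"

definition alpha_in :: "('a \<times> 'a) set \<Rightarrow> 'a graph_fun \<Rightarrow> 'a \<Rightarrow> real" where
  "alpha_in E \<alpha> v = Max {\<alpha> u v | u. (u, v) \<in> E}"

definition alpha_out :: "('a \<times> 'a) set \<Rightarrow> 'a graph_fun \<Rightarrow> 'a \<Rightarrow> real" where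
  "alpha_out E \<alpha> v = Max {\<alpha> v w | w. (v, w) \<in> E}"

definition balance :: "('a \<times> 'a) set \<Rightarrow> 'a graph_fun \<Rightarrow> 'a \<Rightarrow> 'a graph_fun" where
  "balance E \<alpha> v = (let d = (alpha_out E \<alpha> v - alpha_in E \<alpha> v) / 2 in
     (\<lambda>x y. if x \<noteq> v \<and> y = v then \<alpha> x y + d
            else if x = v \<and> y \<noteq> v then \<alpha> x y - d
            else \<alpha> x y))"

definition rhoR :: "('a \<times> 'a) set \<Rightarrow> 'a graph_fun \<Rightarrow> 'a \<Rightarrow> real" where
  "rhoR E \<alpha> v = max 0 (alpha_out E \<alpha> v - alpha_in E \<alpha> v)"

definition rhoL :: "('a \<times> 'a) set \<Rightarrow> 'a graph_fun \<Rightarrow> 'a \<Rightarrow> real" where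
  "rhoL E \<alpha> v = max 0 (alpha_in E \<alpha> v - alpha_out E \<alpha> v)"

definition raise_op :: "('a \<times> 'a) set \<Rightarrow> 'a graph_fun \<Rightarrow> 'a \<Rightarrow> 'a graph_fun" where
  "raise_op E \<alpha> v = (if rhoR E \<alpha> v > 0 then balance E \<alpha> v else \<alpha>)"

definition lower_op :: "('a \<times> 'a) set \<Rightarrow> 'a graph_fun \<Rightarrow> 'a \<Rightarrow> 'a graph_fun" where
  "lower_op E \<alpha> v = (if rhoL E \<alpha> v > 0 then balance E \<alpha> v else \<alpha>)"

end

theory Submission
  imports Defs
begin

text \<open>Lowering at \<open>w\<close> adds \<open>d < 0\<close> to every edge into \<open>w\<close> and \<open>-d\<close> to every
edge out of \<open>w\<close> (self-loops excepted). For \<open>v \<noteq> w\<close> this can only decrease weights out of \<open>v\<close>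
and increase weights into \<open>v\<close>, so \<open>rhoR\<close> at \<open>v\<close> cannot grow. At \<open>v = w\<close> a maximal edge
into \<open>w\<close> is no self-loop (that would force \<open>in \<le> out\<close>), so afterwards
\<open>out - in \<le> (out - d) - (in + d) = 0\<close>. Reversing all edges swaps in- and out-maxima and
turns raising into lowering, which reduces the claim about raising to the one about lowering.\<close>

lemma alpha_in_eq_Max_image: "alpha_in E \<alpha> v = Max ((\<lambda>u. \<alpha> u v) ` (E\<inverse> `` {v}))"
  unfolding alpha_in_def by (rule arg_cong[where f = Max]) auto

lemma alpha_in_ge: "finite E \<Longrightarrow> (u, v) \<in> E \<Longrightarrow> \<alpha> u v \<le> alpha_in E \<alpha> v"
  unfolding alpha_in_eq_Max_image by (rule Max_ge) auto

lemma alpha_in_le_iff: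
  "finite E \<Longrightarrow> E\<inverse> `` {v} \<noteq> {} \<Longrightarrow> alpha_in E \<alpha> v \<le> c \<longleftrightarrow> (\<forall>u. (u, v) \<in> E \<longrightarrow> \<alpha> u v \<le> c)"
  unfolding alpha_in_eq_Max_image by (subst Max_le_iff) auto

lemma alpha_in_attained:
  assumes "finite E" "E\<inverse> `` {v} \<noteq> {}"
  obtains u where "(u, v) \<in> E" "\<alpha> u v = alpha_in E \<alpha> v"
proof -
  have "alpha_in E \<alpha> v \<in> (\<lambda>u. \<alpha> u v) ` (E\<inverse> `` {v})"
    unfolding alpha_in_eq_Max_image using assms by (intro Max_in) auto
  then show ?thesis using that by auto
qed

lemma alpha_in_converse: "alpha_in (E\<inverse>) (\<lambda>x y. \<alpha> y x) v = alpha_out E \<alpha> v"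
  by (simp add: alpha_in_def alpha_out_def)

lemma alpha_out_converse: "alpha_out (E\<inverse>) (\<lambda>x y. \<alpha> y x) v = alpha_in E \<alpha> v"
  by (simp add: alpha_in_def alpha_out_def)

lemma alpha_out_ge: "finite E \<Longrightarrow> (v, w) \<in> E \<Longrightarrow> \<alpha> v w \<le> alpha_out E \<alpha> v"
  using alpha_in_ge[of "E\<inverse>" w v "\<lambda>x y. \<alpha> y x"] by (simp add: alpha_in_converse)

lemma alpha_out_le_iff:
  "finite E \<Longrightarrow> E `` {v} \<noteq> {} \<Longrightarrow> alpha_out E \<alpha> v \<le> c \<longleftrightarrow> (\<forall>w. (v, w) \<in> E \<longrightarrow> \<alpha> v w \<le> c)"
  using alpha_in_le_iff[of "E\<inverse>" v "\<lambda>x y. \<alpha> y x" c] by (simp add: alpha_in_converse)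

lemma rhoR_converse: "rhoR (E\<inverse>) (\<lambda>x y. \<alpha> y x) v = rhoL E \<alpha> v"
  by (simp add: rhoR_def rhoL_def alpha_in_converse alpha_out_converse)

lemma rhoL_converse: "rhoL (E\<inverse>) (\<lambda>x y. \<alpha> y x) v = rhoR E \<alpha> v"
  by (simp add: rhoR_def rhoL_def alpha_in_converse alpha_out_converse)

lemma balance_converse: "balance (E\<inverse>) (\<lambda>x y. \<alpha> y x) v = (\<lambda>x y. balance E \<alpha> v y x)"
  by (intro ext) (simp add: balance_def Let_def alpha_in_converse alpha_out_converse field_simps)

lemma lower_op_converse: "lower_op (E\<inverse>) (\<lambda>x y. \<alpha> y x) v = (\<lambda>x y. raise_op E \<alpha> v y x)"
proof -
  have "rhoL (E\<inverse>) (\<lambda>x y. \<alpha> y x) v = rhoR E \<alpha> v" by (rule rhoL_converse)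
  then show ?thesis unfolding lower_op_def raise_op_def balance_converse by (auto intro!: ext)
qed

lemma rhoR_lower_op_le:
  assumes fin: "finite E"
    and v: "E `` {v} \<noteq> {}" "E\<inverse> `` {v} \<noteq> {}"
    and w: "E `` {w} \<noteq> {}" "E\<inverse> `` {w} \<noteq> {}"
  shows "rhoR E (lower_op E \<alpha> w) v \<le> rhoR E \<alpha> v"
proof (cases "rhoL E \<alpha> w > 0")
  case False
  then show ?thesis by (simp add: lower_op_def)
next
  case True
  define d where "d = (alpha_out E \<alpha> w - alpha_in E \<alpha> w) / 2"
  define \<beta> where "\<beta> = balance E \<alpha> w"
  have "d < 0" using True by (simp add: rhoL_def d_def)
  have \<beta>: "\<beta> x y = (if x \<noteq> w \<and> y = w then \<alpha> x y + d
                   else if x = w \<and> y \<noteq> w then \<alpha> x y - d else \<alpha> x y)" for x y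
    by (simp add: \<beta>_def balance_def d_def Let_def)
  have lower: "lower_op E \<alpha> w = \<beta>" using True by (simp add: lower_op_def \<beta>_def)
  show ?thesis
  proof (cases "v = w")
    case False
    have "alpha_out E \<beta> v \<le> alpha_out E \<alpha> v"
      unfolding alpha_out_le_iff[OF fin v(1)]
    proof (intro allI impI)
      fix y assume "(v, y) \<in> E"
      have "\<beta> v y \<le> \<alpha> v y" using False \<open>d < 0\<close> by (simp add: \<beta>)
      also have "\<dots> \<le> alpha_out E \<alpha> v" using alpha_out_ge[OF fin \<open>(v, y) \<in> E\<close>] .
      finally show "\<beta> v y \<le> alpha_out E \<alpha> v" .
    qed
    moreover have "alpha_in E \<alpha> v \<le> alpha_in E \<beta> v"
    proof -
      obtain u where u: "(u, v) \<in> E" "\<alpha> u v = alpha_in E \<alpha> v"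
        using alpha_in_attained[OF fin v(2)] .
      have "\<alpha> u v \<le> \<beta> u v" using False \<open>d < 0\<close> by (simp add: \<beta>)
      also have "\<dots> \<le> alpha_in E \<beta> v" using alpha_in_ge[OF fin u(1)] .
      finally show ?thesis using u(2) by simp
    qed
    ultimately show ?thesis by (simp add: lower rhoR_def)
  next
    case True
    obtain u where u: "(u, w) \<in> E" "\<alpha> u w = alpha_in E \<alpha> w"
      using alpha_in_attained[OF fin w(2)] .
    have "u \<noteq> w"
    proof
      assume "u = w"
      then have "alpha_in E \<alpha> w \<le> alpha_out E \<alpha> w" using u alpha_out_ge[OF fin] by metis
      with \<open>d < 0\<close> show False by (simp add: d_def)
    qed
    then have "alpha_in E \<alpha> w + d \<le> alpha_in E \<beta> w"
      using u alpha_in_ge[OF fin u(1), of \<beta>] by (simp add: \<beta>)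
    moreover have "alpha_out E \<beta> w \<le> alpha_out E \<alpha> w - d"
      unfolding alpha_out_le_iff[OF fin w(1)]
      using alpha_out_ge[OF fin] \<open>d < 0\<close> by (fastforce simp: \<beta>)
    moreover have "2 * d = alpha_out E \<alpha> w - alpha_in E \<alpha> w" by (simp add: d_def)
    ultimately have "alpha_out E \<beta> w - alpha_in E \<beta> w \<le> 0" by linarith
    then show ?thesis
      using True by (simp add: lower rhoR_def)
  qed
qed

lemma rhoL_raise_op_le:
  assumes "finite E"
    and "E `` {v} \<noteq> {}" "E\<inverse> `` {v} \<noteq> {}"
    and "E `` {w} \<noteq> {}" "E\<inverse> `` {w} \<noteq> {}"
  shows "rhoL E (raise_op E \<alpha> w) v \<le> rhoL E \<alpha> v"
proof -
  have "rhoL E (raise_op E \<alpha> w) v = rhoR (E\<inverse>) (lower_op (E\<inverse>) (\<lambda>x y. \<alpha> y x) w) v"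
    by (simp add: lower_op_converse rhoR_converse)
  also have "\<dots> \<le> rhoR (E\<inverse>) (\<lambda>x y. \<alpha> y x) v"
    using assms by (intro rhoR_lower_op_le) simp_all
  also have "\<dots> = rhoL E \<alpha> v"
    by (rule rhoR_converse)
  finally show ?thesis .
qed

lemma strongly_connected_digraph_degrees:
  assumes "strongly_connected_digraph V E" "v \<in> V"
  shows "finite E" "E `` {v} \<noteq> {}" "E\<inverse> `` {v} \<noteq> {}"
proof -
  have "finite V" "E \<subseteq> V \<times> V" and loop: "(v, v) \<in> E\<^sup>+"
    using assms unfolding strongly_connected_digraph_def by auto
  then show "finite E" using finite_subset by blast
  show "E `` {v} \<noteq> {}" using loop by (auto dest: tranclD)
  show "E\<inverse> `` {v} \<noteq> {}" using loop by (auto elim: tranclE)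
qed

theorem proposition1:
  fixes V :: "'a set" and E :: "('a \<times> 'a) set" and \<alpha> :: "'a graph_fun"
  assumes "strongly_connected_digraph V E"
    and "w \<in> V"
  shows "(\<forall>v\<in>V. rhoR E (lower_op E \<alpha> w) v \<le> rhoR E \<alpha> v)
       \<and> (\<forall>v\<in>V. rhoL E (raise_op E \<alpha> w) v \<le> rhoL E \<alpha> v)"
proof (intro conjI ballI)
  fix v assume "v \<in> V"
  note degrees = strongly_connected_digraph_degrees[OF assms(1)]
  show "rhoR E (lower_op E \<alpha> w) v \<le> rhoR E \<alpha> v"
    using degrees[OF \<open>v \<in> V\<close>] degrees(2,3)[OF \<open>w \<in> V\<close>] by (rule rhoR_lower_op_le)
  show "rhoL E (raise_op E \<alpha> w) v \<le> rhoL E \<alpha> v"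
    using degrees[OF \<open>v \<in> V\<close>] degrees(2,3)[OF \<open>w \<in> V\<close>] by (rule rhoL_raise_op_le)
qed

end
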